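(* There is a set $A\subseteq\mathbb{N}$ that is $d$-complete but is not $n$-$d$-complete for any $n\in\mathbb{N}$.
   Context: $\varphi_0,\varphi_1,\ldots$ is a standard acceptable enumeration of the partial computable functions $\mathbb{N}\to\mathbb{N}$, $\mathcal{K}=\{e:\varphi_e(e)\text{ defined}\}$. $\mathfrak{P}_{\mathrm{fin}}(\mathbb{N})$ is the set of finite subsets of $\mathbb{N}$; $f\colon\mathbb{N}\to\mathfrak{P}_{\mathrm{fin}}(\mathbb{N})$ is computable if $e\mapsto$ (canonical index of $f(e)$) is computable. A recursively enumerable $A$ is $d$-complete if there is a computable $f\colon\mathbb{N}\to\mathfrak{P}_{\mathrm{fin}}(\mathbb{N})$ with $e\in\mathcal{K}\iff\exists z\in f(e)\,[z\in A]$ for all $e$; it is $n$-$d$-complete if moreover such an $f$ can be chosen with $|f(e)|\leq n$ for all $e$. *)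

theory Defs
  imports Main "HOL-Library.Nat_Bijection"
begin

text \<open>A concrete model of the partial computable functions nat \<Rightarrow> nat:
  codes for a standard Turing-complete basis (zero, successor, Cantor-pair
  projections, composition, pairing, primitive recursion, minimisation),
  with a big-step evaluation relation.\<close>

datatype recf = Zf | Sf | Fst | Snd | Comp recf recf | Pr recf recf
  | Rec recf recf | Mn recf

inductive ev :: "recf \<Rightarrow> nat \<Rightarrow> nat \<Rightarrow> bool" where
  ev_Z: "ev Zf x 0"
| ev_S: "ev Sf x (Suc x)"
| ev_Fst: "ev Fst x (fst (prod_decode x))"
| ev_Snd: "ev Snd x (snd (prod_decode x))"
| ev_Comp: "ev g x y \<Longrightarrow> ev f y z \<Longrightarrow> ev (Comp f g) x z"
| ev_Pr: "ev f x a \<Longrightarrow> ev g x b \<Longrightarrow> ev (Pr f g) x (prod_encode (a, b))"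
| ev_Rec0: "ev f x y \<Longrightarrow> ev (Rec f g) (prod_encode (x, 0)) y"
| ev_RecS: "ev (Rec f g) (prod_encode (x, n)) y \<Longrightarrow>
    ev g (prod_encode (x, prod_encode (n, y))) z \<Longrightarrow>
    ev (Rec f g) (prod_encode (x, Suc n)) z"
| ev_Mn: "ev f (prod_encode (x, n)) 0 \<Longrightarrow>
    (\<forall>m<n. \<exists>k. ev f (prod_encode (x, m)) (Suc k)) \<Longrightarrow> ev (Mn f) x n"

primrec code :: "recf \<Rightarrow> nat" where
  "code Zf = prod_encode (0, 0)"
| "code Sf = prod_encode (1, 0)"
| "code Fst = prod_encode (2, 0)"
| "code Snd = prod_encode (3, 0)"
| "code (Comp f g) = prod_encode (4, prod_encode (code f, code g))"
| "code (Pr f g) = prod_encode (5, prod_encode (code f, code g))"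
| "code (Rec f g) = prod_encode (6, prod_encode (code f, code g))"
| "code (Mn f) = prod_encode (7, code f)"

text \<open>phi e x y: the e-th partial computable function maps x to y
  (numbers that are not codes denote the nowhere-defined function).\<close>
definition phi :: "nat \<Rightarrow> nat \<Rightarrow> nat \<Rightarrow> bool" where
  "phi e x y \<longleftrightarrow> (\<exists>c. code c = e \<and> ev c x y)"

definition K :: "nat set" where
  "K = {e. \<exists>y. phi e e y}"

definition re :: "nat set \<Rightarrow> bool" where
  "re A \<longleftrightarrow> (\<exists>e. A = {x. \<exists>y. phi e x y})"

definition computable :: "(nat \<Rightarrow> nat) \<Rightarrow> bool" where
  "computable g \<longleftrightarrow> (\<exists>e. \<forall>x. phi e x (g x))"

definition canon :: "nat set \<Rightarrow> nat" where
  "canon S = (\<Sum>z\<in>S. 2 ^ z)"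

definition computable_fin :: "(nat \<Rightarrow> nat set) \<Rightarrow> bool" where
  "computable_fin f \<longleftrightarrow> (\<forall>e. finite (f e)) \<and> computable (\<lambda>e. canon (f e))"

definition d_complete :: "nat set \<Rightarrow> bool" where
  "d_complete A \<longleftrightarrow> re A \<and>
     (\<exists>f. computable_fin f \<and> (\<forall>e. e \<in> K \<longleftrightarrow> (\<exists>z\<in>f e. z \<in> A)))"

definition n_d_complete :: "nat \<Rightarrow> nat set \<Rightarrow> bool" where
  "n_d_complete n A \<longleftrightarrow> re A \<and>
     (\<exists>f. computable_fin f \<and> (\<forall>e. card (f e) \<le> n) \<and>
          (\<forall>e. e \<in> K \<longleftrightarrow> (\<exists>z\<in>f e. z \<in> A)))"

end

theory Submission
  imports Defs
begin

text \<open>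
  Put \<open>e \<in> K\<close> into \<open>A\<close> as one element of a block \<open>{npair e i | i < (e+1)^3}\<close>, so that the blocks
  witness d-completeness. To defeat a would-be reduction \<open>c\<close> with bound \<open>n\<close>, feed \<open>c\<close> an index
  \<open>x\<close> that, by self-reference, halts on itself iff none of the at most \<open>n\<close> elements \<open>c\<close>
  produces on \<open>x\<close> is in \<open>A\<close> at the stage where \<open>c\<close> has answered and \<open>K \<inter> {..npair c n}\<close> is
  completely enumerated. Afterwards those elements are kept out of \<open>A\<close>: small indices of \<open>K\<close>
  no longer appear, and each larger index \<open>e\<close> avoids them, since the restraints of all
  \<open>r < e\<close> (and all guesses of the count) occupy fewer than \<open>(e+1)^3\<close> slots of its block.
  Hence \<open>x \<in> K\<close> iff \<open>c\<close> produces no element of \<open>A\<close>, so \<open>c\<close> is not a reduction.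
\<close>

definition npair :: "nat \<Rightarrow> nat \<Rightarrow> nat" where "npair a b = prod_encode (a, b)"
definition nfst :: "nat \<Rightarrow> nat" where "nfst z = fst (prod_decode z)"
definition nsnd :: "nat \<Rightarrow> nat" where "nsnd z = snd (prod_decode z)"

lemma nfst_npair [simp]: "nfst (npair a b) = a" by (simp add: nfst_def npair_def)
lemma nsnd_npair [simp]: "nsnd (npair a b) = b" by (simp add: nsnd_def npair_def)
lemma npair_nfst_nsnd [simp]: "npair (nfst z) (nsnd z) = z" by (simp add: nfst_def nsnd_def npair_def)
lemma npair_eq_iff [simp]: "npair a b = npair c d \<longleftrightarrow> a = c \<and> b = d" by (simp add: npair_def)
lemma npair_0_0: "npair 0 0 = 0" by (simp add: npair_def prod_encode_def)
lemma le_npair_2: "b \<le> npair a b" by (simp add: npair_def le_prod_encode_2)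
lemma nsnd_le: "nsnd z \<le> z" by (metis le_npair_2 npair_nfst_nsnd)

lemma ev_Fst_nfst: "ev Fst x (nfst x)" using ev_Fst by (simp add: nfst_def)
lemma ev_Snd_nsnd: "ev Snd x (nsnd x)" using ev_Snd by (simp add: nsnd_def)
lemma ev_Pr_npair: "ev f x a \<Longrightarrow> ev g x b \<Longrightarrow> ev (Pr f g) x (npair a b)"
  using ev_Pr by (simp add: npair_def)
lemma ev_Rec0_npair: "ev f x y \<Longrightarrow> ev (Rec f g) (npair x 0) y"
  using ev_Rec0 by (simp add: npair_def)
lemma ev_RecS_npair:
  "ev (Rec f g) (npair x n) y \<Longrightarrow> ev g (npair x (npair n y)) z \<Longrightarrow> ev (Rec f g) (npair x (Suc n)) z"
  using ev_RecS by (simp add: npair_def)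

lemma ev_deterministic: "ev c x y \<Longrightarrow> ev c x y' \<Longrightarrow> y = y'"
proof (induction arbitrary: y' rule: ev.induct)
  case (ev_Comp g x y f z) from ev_Comp.prems show ?case
    by (cases rule: ev.cases) (use ev_Comp.IH in fastforce)+
next
  case (ev_Pr f x a g b) from ev_Pr.prems show ?case
    by (cases rule: ev.cases) (use ev_Pr.IH in fastforce)+
next
  case (ev_Rec0 f x y g) from ev_Rec0.prems show ?case
    by (cases rule: ev.cases) (use ev_Rec0.IH in fastforce)+
next
  case (ev_RecS f g x n y z) from ev_RecS.prems show ?case
    by (cases rule: ev.cases) (use ev_RecS.IH in fastforce)+
next
  case (ev_Mn f x n)
  have y': "ev f (prod_encode (x, y')) 0" "\<forall>m<y'. \<exists>k. ev f (prod_encode (x, m)) (Suc k)"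
    using ev_Mn.prems by (auto elim: ev.cases)
  have "\<not> y' < n"
  proof
    assume "y' < n"
    then obtain k where "ev f (prod_encode (x, y')) (Suc k)"
      and "\<forall>z. ev f (prod_encode (x, y')) z \<longrightarrow> Suc k = z"
      using ev_Mn.IH(2) by blast
    then show False using y'(1) by fastforce
  qed
  moreover have "\<not> n < y'"
  proof
    assume "n < y'"
    then obtain k where "ev f (prod_encode (x, n)) (Suc k)" using y'(2) by blast
    then show False using ev_Mn.IH(1) by fastforce
  qed
  ultimately show ?case by simp
qed (auto elim: ev.cases)

lemma ev_Mn_halts_iff:
  assumes c: "\<And>w. ev c w (g w)"
  shows "(\<exists>y. ev (Mn c) x y) \<longleftrightarrow> (\<exists>n. g (npair x n) = 0)"
proof
  assume "\<exists>y. ev (Mn c) x y"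
  then obtain y where "ev c (npair x y) 0" by (auto elim: ev.cases simp: npair_def)
  then show "\<exists>n. g (npair x n) = 0" using c ev_deterministic by blast
next
  assume "\<exists>n. g (npair x n) = 0"
  define N where "N = (LEAST n. g (npair x n) = 0)"
  have "g (npair x N) = 0" unfolding N_def by (rule LeastI_ex) fact
  then have "ev c (prod_encode (x, N)) 0" using c[of "npair x N"] by (simp add: npair_def)
  moreover have "\<exists>k. ev c (prod_encode (x, m)) (Suc k)" if "m < N" for m
  proof -
    have "g (npair x m) \<noteq> 0" using that unfolding N_def by (rule not_less_Least)
    then obtain k where "g (npair x m) = Suc k" by (cases "g (npair x m)") auto
    then show ?thesis using c[of "npair x m"] by (auto simp: npair_def)
  qed
  ultimately show "\<exists>y. ev (Mn c) x y" using ev_Mn by blast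
qed

section \<open>Total recursive functions and decidable predicates\<close>

definition recursive :: "(nat \<Rightarrow> nat) \<Rightarrow> bool" where
  "recursive f \<longleftrightarrow> (\<exists>c. \<forall>x. ev c x (f x))"

definition recursive2 :: "(nat \<Rightarrow> nat \<Rightarrow> nat) \<Rightarrow> bool" where
  "recursive2 h \<longleftrightarrow> recursive (\<lambda>z. h (nfst z) (nsnd z))"

definition decidable :: "(nat \<Rightarrow> bool) \<Rightarrow> bool" where
  "decidable P \<longleftrightarrow> recursive (\<lambda>x. if P x then 0 else 1)"

lemma recursive_imp_computable: "recursive f \<Longrightarrow> computable f"
  unfolding recursive_def computable_def phi_def by blast

lemma recursive_cong: "recursive f \<Longrightarrow> (\<And>x. f x = g x) \<Longrightarrow> recursive g"
  by (metis ext)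

lemma recursive_id: "recursive (\<lambda>x. x)"
  unfolding recursive_def
  by (rule exI[of _ "Pr Fst Snd"]) (metis ev_Fst_nfst ev_Snd_nsnd ev_Pr_npair npair_nfst_nsnd)

lemma recursive_comp: "recursive f \<Longrightarrow> recursive g \<Longrightarrow> recursive (\<lambda>x. f (g x))"
  unfolding recursive_def using ev_Comp by blast

lemma recursive_nfst: "recursive f \<Longrightarrow> recursive (\<lambda>x. nfst (f x))"
  unfolding recursive_def using ev_Comp ev_Fst_nfst by blast

lemma recursive_nsnd: "recursive f \<Longrightarrow> recursive (\<lambda>x. nsnd (f x))"
  unfolding recursive_def using ev_Comp ev_Snd_nsnd by blast

lemma recursive_Suc: "recursive f \<Longrightarrow> recursive (\<lambda>x. Suc (f x))"
  unfolding recursive_def using ev_Comp ev_S by blast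

lemma recursive_npair: "recursive f \<Longrightarrow> recursive g \<Longrightarrow> recursive (\<lambda>x. npair (f x) (g x))"
  unfolding recursive_def using ev_Pr_npair by blast

primrec constf :: "nat \<Rightarrow> recf" where
  "constf 0 = Zf"
| "constf (Suc k) = Comp Sf (constf k)"

lemma ev_constf: "ev (constf k) x k"
  by (induction k) (auto intro: ev.intros)

lemma recursive_const: "recursive (\<lambda>x. k)"
  unfolding recursive_def using ev_constf by blast

lemma recursive_nfst': "recursive nfst" using recursive_nfst[OF recursive_id] by simp
lemma recursive_nsnd': "recursive nsnd" using recursive_nsnd[OF recursive_id] by simp
lemma recursive_Suc': "recursive Suc" using recursive_Suc[OF recursive_id] by simp

lemmas recursive_basic = recursive_nfst' recursive_nsnd' recursive_Suc' recursive_id recursive_const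
  recursive_nfst recursive_nsnd recursive_Suc recursive_npair

lemma ev_Rec_primrec:
  assumes f: "\<And>x. ev cf x (f x)" and g: "\<And>z. ev cg z (g z)"
    and h0: "\<And>x. h x 0 = f x" and hS: "\<And>x n. h x (Suc n) = g (npair x (npair n (h x n)))"
  shows "ev (Rec cf cg) (npair x n) (h x n)"
proof (induction n)
  case 0 then show ?case using ev_Rec0_npair[OF f] h0 by simp
next
  case (Suc n) then show ?case using ev_RecS_npair[OF Suc g] hS by simp
qed

lemma recursive2_primrec:
  assumes h0: "\<And>x. h x 0 = f x" and hS: "\<And>x n. h x (Suc n) = g x n (h x n)"
    and "recursive f" and "recursive (\<lambda>w. g (nfst w) (nfst (nsnd w)) (nsnd (nsnd w)))"
  shows "recursive2 h"
proof -
  from assms(3,4) obtain cf cg where "\<And>x. ev cf x (f x)"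
      and "\<And>w. ev cg w (g (nfst w) (nfst (nsnd w)) (nsnd (nsnd w)))"
    unfolding recursive_def by blast
  then have "ev (Rec cf cg) (npair x n) (h x n)" for x n
    by (intro ev_Rec_primrec[where g="\<lambda>w. g (nfst w) (nfst (nsnd w)) (nsnd (nsnd w))"])
      (simp_all add: h0 hS)
  then have "\<forall>z. ev (Rec cf cg) z (h (nfst z) (nsnd z))" by (metis npair_nfst_nsnd)
  then show ?thesis unfolding recursive2_def recursive_def by blast
qed

lemma recursive2_comp:
  "recursive2 h \<Longrightarrow> recursive f \<Longrightarrow> recursive g \<Longrightarrow> recursive (\<lambda>x. h (f x) (g x))"
  unfolding recursive2_def by (drule recursive_comp[OF _ recursive_npair], assumption+) simp

lemma recursive_if_zero:
  assumes "recursive p" "recursive a" "recursive b"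
  shows "recursive (\<lambda>x. if p x = 0 then a x else b x)"
proof -
  define sel where "sel y n = (if n = 0 then nfst y else nsnd y)" for y n :: nat
  have "recursive2 sel"
    by (rule recursive2_primrec[where f=nfst and g="\<lambda>x n prev. nsnd x"],
        simp add: sel_def, simp add: sel_def, (intro recursive_basic)+)
  from recursive2_comp[OF this recursive_npair[OF assms(2,3)] assms(1)] show ?thesis
    by (rule recursive_cong) (simp add: sel_def)
qed

lemma recursive_if:
  assumes "decidable P" "recursive a" "recursive b"
  shows "recursive (\<lambda>x. if P x then a x else b x)"
proof -
  have "recursive (\<lambda>x. if (if P x then 0 else 1) = (0::nat) then a x else b x)"
    using recursive_if_zero assms[unfolded decidable_def] by blast
  then show ?thesis by (rule recursive_cong) simp
qed

lemma recursive_add: "recursive f \<Longrightarrow> recursive g \<Longrightarrow> recursive (\<lambda>x. f x + g x)"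
proof -
  have "recursive2 (+)"
    by (rule recursive2_primrec[where f="\<lambda>x. x" and g="\<lambda>x n prev. Suc prev"],
        simp, simp, (intro recursive_basic)+)
  then show "recursive f \<Longrightarrow> recursive g \<Longrightarrow> recursive (\<lambda>x. f x + g x)" by (rule recursive2_comp)
qed

lemma recursive_mult: "recursive f \<Longrightarrow> recursive g \<Longrightarrow> recursive (\<lambda>x. f x * g x)"
proof -
  have "recursive2 (*)"
    by (rule recursive2_primrec[where f="\<lambda>x. 0" and g="\<lambda>x n prev. prev + x"],
        simp, simp, (intro recursive_basic recursive_add)+)
  then show "recursive f \<Longrightarrow> recursive g \<Longrightarrow> recursive (\<lambda>x. f x * g x)" by (rule recursive2_comp)
qed

lemma recursive_pred: "recursive f \<Longrightarrow> recursive (\<lambda>x. f x - 1)"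
proof -
  have "recursive2 (\<lambda>x n. n - 1)"
    by (rule recursive2_primrec[where f="\<lambda>x. 0" and g="\<lambda>x n prev. n"],
        simp, simp, (intro recursive_basic)+)
  from recursive2_comp[OF this recursive_const] show "recursive f \<Longrightarrow> recursive (\<lambda>x. f x - 1)" .
qed

lemma recursive_diff: "recursive f \<Longrightarrow> recursive g \<Longrightarrow> recursive (\<lambda>x. f x - g x)"
proof -
  have "recursive2 (-)"
    by (rule recursive2_primrec[where f="\<lambda>x. x" and g="\<lambda>x n prev. prev - 1"],
        simp, simp, (intro recursive_basic recursive_pred)+)
  then show "recursive f \<Longrightarrow> recursive g \<Longrightarrow> recursive (\<lambda>x. f x - g x)" by (rule recursive2_comp)
qed

lemmas recursive_arith = recursive_basic recursive_add recursive_mult recursive_diff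

lemma decidable_eq: "recursive f \<Longrightarrow> recursive g \<Longrightarrow> decidable (\<lambda>x. f x = g x)"
  unfolding decidable_def
  by (rule recursive_cong[OF recursive_if_zero[where p="\<lambda>x. (f x - g x) + (g x - f x)"
        and a="\<lambda>x. 0" and b="\<lambda>x. 1"]]) ((intro recursive_arith; assumption)+, auto)

lemma decidable_less: "recursive f \<Longrightarrow> recursive g \<Longrightarrow> decidable (\<lambda>x. f x < g x)"
  unfolding decidable_def
  by (rule recursive_cong[OF recursive_if_zero[where p="\<lambda>x. g x - f x" and a="\<lambda>x. 1" and b="\<lambda>x. 0"]])
    ((intro recursive_arith; assumption)+, auto)

lemma decidable_not: "decidable P \<Longrightarrow> decidable (\<lambda>x. \<not> P x)"
  unfolding decidable_def
  by (rule recursive_cong[OF recursive_if_zero[where a="\<lambda>x. 1" and b="\<lambda>x. 0"]])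
    (assumption, (intro recursive_basic)+, auto)

lemma decidable_le: "recursive f \<Longrightarrow> recursive g \<Longrightarrow> decidable (\<lambda>x. f x \<le> g x)"
  using decidable_not[OF decidable_less[of g f]] by (simp add: not_less)

lemma decidable_conj: "decidable P \<Longrightarrow> decidable Q \<Longrightarrow> decidable (\<lambda>x. P x \<and> Q x)"
  unfolding decidable_def
  by (rule recursive_cong[OF recursive_if_zero[where p="\<lambda>x. (if P x then 0 else 1) + (if Q x then 0 else 1)"
        and a="\<lambda>x. 0" and b="\<lambda>x. 1"]]) ((intro recursive_arith; assumption)+, auto)

lemma decidable_disj: "decidable P \<Longrightarrow> decidable Q \<Longrightarrow> decidable (\<lambda>x. P x \<or> Q x)"
  using decidable_not[OF decidable_conj[OF decidable_not decidable_not]] by simp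

lemma decidable_imp: "decidable P \<Longrightarrow> decidable Q \<Longrightarrow> decidable (\<lambda>x. P x \<longrightarrow> Q x)"
  using decidable_disj[OF decidable_not] by simp

lemma decidable_const: "decidable (\<lambda>x. b)"
  unfolding decidable_def by (cases b) (simp_all add: recursive_const)

lemma decidable_comp: "decidable P \<Longrightarrow> recursive f \<Longrightarrow> decidable (\<lambda>x. P (f x))"
  unfolding decidable_def by (drule recursive_comp, assumption) simp

lemma decidable_shift2:
  "decidable (\<lambda>z. P (nfst z) (nsnd z)) \<Longrightarrow> decidable (\<lambda>w. P (nfst w) (nfst (nsnd w)))"
  by (drule decidable_comp[where f="\<lambda>w. npair (nfst w) (nfst (nsnd w))"], (intro recursive_basic)+) simp

lemma recursive_shift2:
  "recursive (\<lambda>z. P (nfst z) (nsnd z)) \<Longrightarrow> recursive (\<lambda>w. P (nfst w) (nfst (nsnd w)))"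
  by (drule recursive_comp[where g="\<lambda>w. npair (nfst w) (nfst (nsnd w))"], (intro recursive_basic)+) simp

lemma decidable_bex_less:
  assumes P: "decidable (\<lambda>z. P (nfst z) (nsnd z))" and n: "recursive n"
  shows "decidable (\<lambda>x. \<exists>i<n x. P x i)"
proof -
  define B where "B x i = (if \<exists>j<i. P x j then 0 else (1::nat))" for x i
  have "recursive2 B"
  proof (rule recursive2_primrec[where f="\<lambda>x. 1" and g="\<lambda>x i prev. if P x i then 0 else prev"])
    show "recursive (\<lambda>w. if P (nfst w) (nfst (nsnd w)) then 0 else nsnd (nsnd w))"
      by (rule recursive_if[OF decidable_shift2[OF P]]) (intro recursive_basic)+
  qed (auto simp: B_def less_Suc_eq intro: recursive_const)
  from recursive2_comp[OF this recursive_id n] show ?thesis unfolding decidable_def B_def .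
qed

lemma decidable_ball_less:
  assumes P: "decidable (\<lambda>z. P (nfst z) (nsnd z))" and n: "recursive n"
  shows "decidable (\<lambda>x. \<forall>i<n x. P x i)"
  using decidable_not[OF decidable_bex_less[OF decidable_not[OF P] n]] by simp

lemma decidable_bex_le:
  assumes P: "decidable (\<lambda>z. P (nfst z) (nsnd z))" and n: "recursive n"
  shows "decidable (\<lambda>x. \<exists>i\<le>n x. P x i)"
  using decidable_bex_less[OF P recursive_Suc[OF n]] by (simp add: less_Suc_eq_le)

lemma recursive_sum:
  assumes f: "recursive (\<lambda>z. f (nfst z) (nsnd z))" and n: "recursive n"
  shows "recursive (\<lambda>x. \<Sum>i<n x. f x i)"
proof -
  have "recursive2 (\<lambda>x m. \<Sum>i<m. f x i)"
    by (rule recursive2_primrec[where f="\<lambda>x. 0" and g="\<lambda>x i prev. prev + f x i"],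
        simp, simp, (intro recursive_arith recursive_shift2[OF f])+)
  from recursive2_comp[OF this recursive_id n] show ?thesis .
qed

text \<open>\<open>least_below P n\<close> is the least \<open>i < n\<close> with \<open>P i\<close>, and \<open>n\<close> if there is none.\<close>
primrec least_below :: "(nat \<Rightarrow> bool) \<Rightarrow> nat \<Rightarrow> nat" where
  "least_below P 0 = 0"
| "least_below P (Suc n) =
    (if least_below P n < n then least_below P n else if P n then n else Suc n)"

lemma least_below_le: "least_below P n \<le> n"
  by (induction n) auto

lemma least_below_less_imp: "least_below P n < n \<Longrightarrow> P (least_below P n)"
  by (induction n) (auto split: if_splits)

lemma not_less_least_below: "j < least_below P n \<Longrightarrow> \<not> P j"
proof (induction n)
  case (Suc n)
  show ?case
  proof (cases "least_below P n < n")
    case True with Suc show ?thesis by simp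
  next
    case False
    then have "least_below P n = n" using least_below_le[of P n] by linarith
    with Suc show ?thesis by (cases "P n") (auto simp: less_Suc_eq)
  qed
qed simp

lemma least_below_less: "P i \<Longrightarrow> i < n \<Longrightarrow> least_below P n < n"
  using not_less_least_below[of i P n] least_below_le[of P n] by linarith

lemma recursive_least_below:
  assumes P: "decidable (\<lambda>z. P (nfst z) (nsnd z))" and n: "recursive n"
  shows "recursive (\<lambda>x. least_below (P x) (n x))"
proof -
  have "recursive2 (\<lambda>x m. least_below (P x) m)"
  proof (rule recursive2_primrec[where f="\<lambda>x. 0" and
        g="\<lambda>x i prev. if prev < i then prev else if P x i then i else Suc i"])
    show "recursive (\<lambda>w. if nsnd (nsnd w) < nfst (nsnd w) then nsnd (nsnd w)
        else if P (nfst w) (nfst (nsnd w)) then nfst (nsnd w) else Suc (nfst (nsnd w)))"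
      by (intro recursive_if decidable_less decidable_shift2[OF P] recursive_basic)
  qed (simp_all add: recursive_const)
  from recursive2_comp[OF this recursive_id n] show ?thesis .
qed

lemma recursive_pow2: "recursive f \<Longrightarrow> recursive (\<lambda>x. 2 ^ f x)"
proof -
  have "recursive2 (\<lambda>x n. 2 ^ n)"
    by (rule recursive2_primrec[where f="\<lambda>x. 1" and g="\<lambda>x n prev. prev + prev"],
        simp, simp, (intro recursive_arith)+)
  from recursive2_comp[OF this recursive_const] show "recursive f \<Longrightarrow> recursive (\<lambda>x. 2 ^ f x)" .
qed

lemma recursive_div2: "recursive f \<Longrightarrow> recursive (\<lambda>x. f x div 2)"
proof -
  define h where "h (y::nat) n = npair (n div 2) (n mod 2)" for y n :: nat
  have "recursive2 h"
  proof (rule recursive2_primrec[where f="\<lambda>x. 0" and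
        g="\<lambda>x n prev. if nsnd prev = 0 then npair (nfst prev) 1 else npair (Suc (nfst prev)) 0"])
    show "recursive (\<lambda>w. if nsnd (nsnd (nsnd w)) = 0 then npair (nfst (nsnd (nsnd w))) 1
        else npair (Suc (nfst (nsnd (nsnd w)))) 0)"
      by (intro recursive_if decidable_eq recursive_basic)
  next
    fix x n
    show "h x (Suc n) = (if nsnd (h x n) = 0 then npair (nfst (h x n)) 1 else npair (Suc (nfst (h x n))) 0)"
      unfolding h_def by (simp; presburger)
  qed (simp_all add: h_def recursive_const npair_0_0)
  from recursive_nfst[OF recursive2_comp[OF this recursive_const]]
  show "recursive f \<Longrightarrow> recursive (\<lambda>x. f x div 2)"
    by (simp add: h_def)
qed

lemma recursive_div_pow2: "recursive f \<Longrightarrow> recursive g \<Longrightarrow> recursive (\<lambda>x. f x div 2 ^ g x)"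
proof -
  have div_pow2_Suc: "x div 2 ^ Suc n = x div 2 ^ n div 2" for x n :: nat
    by (metis div_mult2_eq power_Suc2)
  have "recursive2 (\<lambda>v z. v div 2 ^ z)"
    by (rule recursive2_primrec[where f="\<lambda>x. x" and g="\<lambda>x n prev. prev div 2"],
        simp, rule div_pow2_Suc, (intro recursive_basic recursive_div2)+)
  then show "recursive f \<Longrightarrow> recursive g \<Longrightarrow> recursive (\<lambda>x. f x div 2 ^ g x)"
    by (rule recursive2_comp)
qed

lemma decidable_odd: "recursive f \<Longrightarrow> decidable (\<lambda>x. odd (f x))"
proof -
  assume "recursive f"
  then have "decidable (\<lambda>x. f x - 2 * (f x div 2) = 1)"
    by (intro decidable_eq recursive_diff recursive_mult recursive_div2 recursive_const)
  moreover have "\<And>n::nat. (n - 2 * (n div 2) = 1) = odd n" by presburger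
  ultimately show ?thesis by simp
qed

lemma recursive_iterate:
  assumes "recursive f" "recursive init" "recursive n"
  shows "recursive (\<lambda>x. (f ^^ (n x)) (init x))"
proof -
  have "recursive2 (\<lambda>w k. (f ^^ k) (init w))"
    by (rule recursive2_primrec[where f=init and g="\<lambda>w k prev. f prev"])
      (simp_all add: assms(2) recursive_comp[OF assms(1) recursive_nsnd[OF recursive_nsnd']])
  from recursive2_comp[OF this recursive_id assms(3)] show ?thesis .
qed

lemmas recursive_intros = recursive_arith recursive_if recursive_pow2 recursive_div2
  recursive_div_pow2 recursive_sum recursive_least_below
lemmas decidable_intros = decidable_eq decidable_less decidable_le decidable_not decidable_conj
  decidable_disj decidable_imp decidable_const decidable_bex_less decidable_ball_less
  decidable_bex_le decidable_odd

text \<open>Its transition function is simple enough to be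
  arithmetised below, which yields a universal function with a decidable step-counter.\<close>

datatype frame = FComp recf | FPr1 recf nat | FPr2 nat | FRec recf nat nat | FMn recf nat nat
datatype mode = Ev recf nat | Rt nat

type_synonym config = "mode \<times> frame list"

fun mstep :: "config \<Rightarrow> config" where
  "mstep (Ev Zf x, S) = (Rt 0, S)"
| "mstep (Ev Sf x, S) = (Rt (Suc x), S)"
| "mstep (Ev Fst x, S) = (Rt (nfst x), S)"
| "mstep (Ev Snd x, S) = (Rt (nsnd x), S)"
| "mstep (Ev (Comp f g) x, S) = (Ev g x, FComp f # S)"
| "mstep (Ev (Pr f g) x, S) = (Ev f x, FPr1 g x # S)"
| "mstep (Ev (Rec f g) z, S) = (if nsnd z = 0 then (Ev f (nfst z), S)
     else (Ev (Rec f g) (npair (nfst z) (nsnd z - 1)), FRec g (nfst z) (nsnd z - 1) # S))"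
| "mstep (Ev (Mn f) x, S) = (Ev f (npair x 0), FMn f x 0 # S)"
| "mstep (Rt v, []) = (Rt v, [])"
| "mstep (Rt v, FComp f # S) = (Ev f v, S)"
| "mstep (Rt a, FPr1 g x # S) = (Ev g x, FPr2 a # S)"
| "mstep (Rt b, FPr2 a # S) = (Rt (npair a b), S)"
| "mstep (Rt y, FRec g x m # S) = (Ev g (npair x (npair m y)), S)"
| "mstep (Rt v, FMn f x n # S) = (if v = 0 then (Rt n, S)
     else (Ev f (npair x (Suc n)), FMn f x (Suc n) # S))"

definition iterates_to :: "('a \<Rightarrow> 'a) \<Rightarrow> 'a \<Rightarrow> 'a \<Rightarrow> bool" where
  "iterates_to f a b \<longleftrightarrow> (\<exists>k. (f ^^ k) a = b)"

lemma iterates_to_refl: "iterates_to f a a"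
  unfolding iterates_to_def by (rule exI[of _ 0]) simp

lemma iterates_to_step: "iterates_to f (f a) b \<Longrightarrow> iterates_to f a b"
  unfolding iterates_to_def by (metis funpow_Suc_right o_apply)

lemma iterates_to_trans: "iterates_to f a b \<Longrightarrow> iterates_to f b c \<Longrightarrow> iterates_to f a c"
  unfolding iterates_to_def by (metis funpow_add o_apply)

abbreviation reaches :: "config \<Rightarrow> config \<Rightarrow> bool" where
  "reaches \<equiv> iterates_to mstep"

lemma reaches_Mn_search:
  assumes "\<forall>m<n. \<exists>k. ev f (npair x m) (Suc k) \<and> (\<forall>S. reaches (Ev f (npair x m), S) (Rt (Suc k), S))"
    and "\<forall>S. reaches (Ev f (npair x n), S) (Rt 0, S)"
    and "m \<le> n"
  shows "reaches (Ev f (npair x m), FMn f x m # S) (Rt n, S)"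
  using assms(3)
proof (induction "n - m" arbitrary: m)
  case 0
  then have "m = n" by simp
  have "reaches (Ev f (npair x m), FMn f x m # S) (Rt 0, FMn f x m # S)"
    using assms(2) \<open>m = n\<close> by simp
  moreover have "reaches (Rt 0, FMn f x m # S) (Rt n, S)"
    by (rule iterates_to_step) (simp add: \<open>m = n\<close> iterates_to_refl)
  ultimately show ?case by (rule iterates_to_trans)
next
  case (Suc d)
  then obtain k where k: "\<forall>S. reaches (Ev f (npair x m), S) (Rt (Suc k), S)"
    using assms(1) by (metis diff_is_0_eq' nat.distinct(1) not_le)
  then have "reaches (Ev f (npair x m), FMn f x m # S) (Rt (Suc k), FMn f x m # S)" by simp
  moreover have "reaches (Rt (Suc k), FMn f x m # S) (Rt n, S)"
    by (rule iterates_to_step) (use Suc.hyps(1)[of "Suc m"] Suc.hyps(2) in simp)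
  ultimately show ?case by (rule iterates_to_trans)
qed

lemma ev_imp_reaches: "ev c x v \<Longrightarrow> reaches (Ev c x, S) (Rt v, S)"
proof (induction arbitrary: S rule: ev.induct)
  case (ev_Fst x) then show ?case by (rule iterates_to_step) (simp add: iterates_to_refl nfst_def)
next
  case (ev_Snd x) then show ?case by (rule iterates_to_step) (simp add: iterates_to_refl nsnd_def)
next
  case (ev_Comp g x y f z)
  show ?case
    by (rule iterates_to_step, simp, rule iterates_to_trans[OF ev_Comp.IH(1)],
        rule iterates_to_step, simp, rule ev_Comp.IH(2))
next
  case (ev_Pr f x a g b)
  have "reaches (Ev (Pr f g) x, S) (Rt a, FPr1 g x # S)"
    by (rule iterates_to_step, simp, rule ev_Pr.IH(1))
  moreover have "reaches (Rt a, FPr1 g x # S) (Rt b, FPr2 a # S)"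
    by (rule iterates_to_step, simp, rule ev_Pr.IH(2))
  moreover have "reaches (Rt b, FPr2 a # S) (Rt (prod_encode (a, b)), S)"
    by (rule iterates_to_step) (simp add: npair_def iterates_to_refl)
  ultimately show ?case by (meson iterates_to_trans)
next
  case (ev_Rec0 f x y g)
  show ?case by (rule iterates_to_step) (simp add: npair_def[symmetric], rule ev_Rec0.IH)
next
  case (ev_RecS f g x n y z)
  have "reaches (Ev (Rec f g) (npair x (Suc n)), S) (Rt y, FRec g x n # S)"
    by (rule iterates_to_step) (simp, rule ev_RecS.IH(1)[unfolded npair_def[symmetric]])
  moreover have "reaches (Rt y, FRec g x n # S) (Rt z, S)"
    by (rule iterates_to_step) (simp, rule ev_RecS.IH(2)[unfolded npair_def[symmetric]])
  ultimately show ?case by (simp add: npair_def[symmetric] iterates_to_trans)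
next
  case (ev_Mn f x n)
  have search: "reaches (Ev f (npair x 0), FMn f x 0 # S) (Rt n, S)"
    by (rule reaches_Mn_search) (use ev_Mn.IH in \<open>auto simp: npair_def\<close>)
  show ?case by (rule iterates_to_step) (simp add: search)
qed (rule iterates_to_step, simp add: iterates_to_refl)+

inductive returns :: "frame list \<Rightarrow> nat \<Rightarrow> nat \<Rightarrow> bool" where
  returns_Nil: "returns [] v v"
| returns_Comp: "ev f y z \<Longrightarrow> returns S z w \<Longrightarrow> returns (FComp f # S) y w"
| returns_Pr1: "ev g x b \<Longrightarrow> returns S (npair a b) w \<Longrightarrow> returns (FPr1 g x # S) a w"
| returns_Pr2: "returns S (npair a b) w \<Longrightarrow> returns (FPr2 a # S) b w"
| returns_Rec: "ev g (npair x (npair m y)) z \<Longrightarrow> returns S z w \<Longrightarrow> returns (FRec g x m # S) y w"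
| returns_Mn0: "returns S n w \<Longrightarrow> returns (FMn f x n # S) 0 w"
| returns_MnS: "ev f (npair x (Suc n)) v' \<Longrightarrow> returns (FMn f x (Suc n) # S) v' w \<Longrightarrow>
    returns (FMn f x n # S) (Suc k) w"

inductive_cases returns_CompE: "returns (FComp f # S) y w"
inductive_cases returns_Pr1E: "returns (FPr1 g x # S) a w"
inductive_cases returns_Pr2E: "returns (FPr2 a # S) b w"
inductive_cases returns_RecE: "returns (FRec g x m # S) y w"

lemma returns_FMn_imp_ev_Mn:
  "returns S0 v w \<Longrightarrow> S0 = FMn f x n # S \<Longrightarrow> ev f (npair x n) v \<Longrightarrow>
    \<forall>m<n. \<exists>k. ev f (npair x m) (Suc k) \<Longrightarrow> \<exists>N. ev (Mn f) x N \<and> returns S N w"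
proof (induction arbitrary: n rule: returns.induct)
  case (returns_Mn0 S' n' w f' x')
  then show ?case using ev_Mn[of f x n] by (auto simp: npair_def)
next
  case (returns_MnS f' x' n' v' S' w k)
  then have "\<forall>m<Suc n. \<exists>k. ev f (npair x m) (Suc k)" by (auto simp: less_Suc_eq)
  with returns_MnS show ?case by auto
qed auto

fun yields :: "config \<Rightarrow> nat \<Rightarrow> bool" where
  "yields (Ev c x, S) w \<longleftrightarrow> (\<exists>v. ev c x v \<and> returns S v w)"
| "yields (Rt v, S) w \<longleftrightarrow> returns S v w"

lemma yields_mstep: "yields (mstep st) w \<Longrightarrow> yields st w"
proof (induction st rule: mstep.induct)
  case (1 x S) then show ?case using ev_Z by auto
next
  case (2 x S) then show ?case using ev_S by auto
next
  case (3 x S) then show ?case using ev_Fst_nfst by auto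
next
  case (4 x S) then show ?case using ev_Snd_nsnd by auto
next
  case (5 f g x S)
  then obtain v where "ev g x v" "returns (FComp f # S) v w" by auto
  moreover from this(2) obtain z where "ev f v z" "returns S z w" by (rule returns_CompE)
  ultimately show ?case unfolding yields.simps using ev_Comp by blast
next
  case (6 f g x S)
  then obtain a where "ev f x a" "returns (FPr1 g x # S) a w" by auto
  moreover from this(2) obtain b where "ev g x b" "returns S (npair a b) w" by (rule returns_Pr1E)
  ultimately show ?case unfolding yields.simps using ev_Pr_npair by blast
next
  case (7 f g z S)
  show ?case
  proof (cases "nsnd z")
    case 0
    with 7 obtain v where "ev f (nfst z) v" "returns S v w" by auto
    moreover have "z = npair (nfst z) 0" using 0 by (metis npair_nfst_nsnd)
    ultimately show ?thesis unfolding yields.simps using ev_Rec0_npair by metis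
  next
    case (Suc m)
    with 7 obtain y where y: "ev (Rec f g) (npair (nfst z) m) y" "returns (FRec g (nfst z) m # S) y w"
      by auto
    from y(2) obtain v where "ev g (npair (nfst z) (npair m y)) v" "returns S v w"
      by (rule returns_RecE)
    moreover have "z = npair (nfst z) (Suc m)" using Suc by (metis npair_nfst_nsnd)
    ultimately show ?thesis unfolding yields.simps using ev_RecS_npair[OF y(1)] by metis
  qed
next
  case (8 f x S)
  then obtain v where "ev f (npair x 0) v" "returns (FMn f x 0 # S) v w" by auto
  from returns_FMn_imp_ev_Mn[OF this(2) refl this(1)] show ?case by simp
next
  case (10 v f S) then show ?case using returns_Comp by auto
next
  case (11 a g x S)
  then obtain b where "ev g x b" "returns (FPr2 a # S) b w" by auto
  moreover from this(2) have "returns S (npair a b) w" by (rule returns_Pr2E)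
  ultimately show ?case using returns_Pr1 by simp
next
  case (12 b a S) then show ?case using returns_Pr2 by simp
next
  case (13 y g x m S) then show ?case using returns_Rec by auto
next
  case (14 v f x n S)
  show ?case
  proof (cases v)
    case 0 then show ?thesis using 14 returns_Mn0 by simp
  next
    case (Suc k) then show ?thesis using 14 returns_MnS by auto
  qed
qed simp

lemma yields_mstep_iterate: "yields ((mstep ^^ k) st) w \<Longrightarrow> yields st w"
proof (induction k arbitrary: st)
  case (Suc k)
  then have "yields ((mstep ^^ k) (mstep st)) w" by (simp add: funpow_Suc_right del: funpow.simps)
  then show ?case using Suc.IH yields_mstep by blast
qed simp

lemma ev_iff_reaches: "ev c x w \<longleftrightarrow> reaches (Ev c x, []) (Rt w, [])"
proof
  show "ev c x w \<Longrightarrow> reaches (Ev c x, []) (Rt w, [])" by (rule ev_imp_reaches)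
next
  assume "reaches (Ev c x, []) (Rt w, [])"
  then obtain k where "(mstep ^^ k) (Ev c x, []) = (Rt w, [])" unfolding iterates_to_def by blast
  then have "yields ((mstep ^^ k) (Ev c x, [])) w" by (simp add: returns_Nil)
  then have "yields (Ev c x, []) w" by (rule yields_mstep_iterate)
  then show "ev c x w" by (auto elim: returns.cases)
qed

section \<open>A universal function with a decidable step counter\<close>

lemma code_npair:
  "code Zf = npair 0 0" "code Sf = npair 1 0" "code Fst = npair 2 0" "code Snd = npair 3 0"
  "code (Comp f g) = npair 4 (npair (code f) (code g))" "code (Pr f g) = npair 5 (npair (code f) (code g))"
  "code (Rec f g) = npair 6 (npair (code f) (code g))" "code (Mn f) = npair 7 (code f)"
  by (simp_all add: npair_def)

declare code.simps [simp del]

lemma code_inj: "code c = code d \<Longrightarrow> c = d"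
proof (induction c arbitrary: d)
  case (Comp c1 c2) then show ?case by (cases d) (simp_all add: code_npair)
next
  case (Pr c1 c2) then show ?case by (cases d) (simp_all add: code_npair)
next
  case (Rec c1 c2) then show ?case by (cases d) (simp_all add: code_npair)
next
  case (Mn c1) then show ?case by (cases d) (simp_all add: code_npair)
qed (case_tac d; simp add: code_npair)+

lemma phi_code: "phi (code c) x y \<longleftrightarrow> ev c x y"
  unfolding phi_def using code_inj by blast

lemma phi_deterministic: "phi e x y \<Longrightarrow> phi e x y' \<Longrightarrow> y = y'"
  unfolding phi_def using code_inj ev_deterministic by blast

fun frame_code :: "frame \<Rightarrow> nat" where
  "frame_code (FComp f) = npair 0 (code f)"
| "frame_code (FPr1 g x) = npair 1 (npair (code g) x)"
| "frame_code (FPr2 a) = npair 2 a"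
| "frame_code (FRec g x m) = npair 3 (npair (code g) (npair x m))"
| "frame_code (FMn f x n) = npair 4 (npair (code f) (npair x n))"

fun stack_code :: "frame list \<Rightarrow> nat" where
  "stack_code [] = 0"
| "stack_code (F # S) = Suc (npair (frame_code F) (stack_code S))"

fun mode_code :: "mode \<Rightarrow> nat" where
  "mode_code (Ev c x) = npair 0 (npair (code c) x)"
| "mode_code (Rt v) = npair 1 v"

fun config_code :: "config \<Rightarrow> nat" where
  "config_code (m, S) = npair (mode_code m) (stack_code S)"

definition step_code :: "nat \<Rightarrow> nat" where
  "step_code z = (let m = nfst z; S = nsnd z in
    if nfst m = 0 then
      (let e = nfst (nsnd m); x = nsnd (nsnd m); t = nfst e; r = nsnd e in
       if t = 0 then npair (npair 1 0) S
       else if t = 1 then npair (npair 1 (Suc x)) S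
       else if t = 2 then npair (npair 1 (nfst x)) S
       else if t = 3 then npair (npair 1 (nsnd x)) S
       else if t = 4 then npair (npair 0 (npair (nsnd r) x)) (Suc (npair (npair 0 (nfst r)) S))
       else if t = 5 then npair (npair 0 (npair (nfst r) x)) (Suc (npair (npair 1 (npair (nsnd r) x)) S))
       else if t = 6 then
         (if nsnd x = 0 then npair (npair 0 (npair (nfst r) (nfst x))) S
          else npair (npair 0 (npair e (npair (nfst x) (nsnd x - 1))))
                 (Suc (npair (npair 3 (npair (nsnd r) (npair (nfst x) (nsnd x - 1)))) S)))
       else if t = 7 then npair (npair 0 (npair r (npair x 0))) (Suc (npair (npair 4 (npair r (npair x 0))) S))
       else z)
    else
      (let v = nsnd m in
       if S = 0 then z
       else (let F = nfst (S - 1); S' = nsnd (S - 1); ft = nfst F; fr = nsnd F in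
         if ft = 0 then npair (npair 0 (npair fr v)) S'
         else if ft = 1 then npair (npair 0 (npair (nfst fr) (nsnd fr))) (Suc (npair (npair 2 v) S'))
         else if ft = 2 then npair (npair 1 (npair fr v)) S'
         else if ft = 3 then npair (npair 0 (npair (nfst fr) (npair (nfst (nsnd fr)) (npair (nsnd (nsnd fr)) v)))) S'
         else if ft = 4 then
           (if v = 0 then npair (npair 1 (nsnd (nsnd fr))) S'
            else npair (npair 0 (npair (nfst fr) (npair (nfst (nsnd fr)) (Suc (nsnd (nsnd fr))))))
                   (Suc (npair (npair 4 (npair (nfst fr) (npair (nfst (nsnd fr)) (Suc (nsnd (nsnd fr)))))) S')))
         else z)))"

lemma step_code_config_code: "step_code (config_code st) = config_code (mstep st)"
  by (induction st rule: mstep.induct) (simp_all add: step_code_def Let_def code_npair)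

lemma recursive_step_code: "recursive step_code"
  unfolding step_code_def Let_def by (intro recursive_intros decidable_intros)

definition run_code :: "nat \<Rightarrow> nat \<Rightarrow> nat \<Rightarrow> nat" where
  "run_code e x s = (step_code ^^ s) (npair (npair 0 (npair e x)) 0)"

definition final_code :: "nat \<Rightarrow> bool" where
  "final_code z \<longleftrightarrow> nfst (nfst z) = 1 \<and> nsnd z = 0"

lemma run_code_code: "run_code (code c) x s = config_code ((mstep ^^ s) (Ev c x, []))"
  by (induction s) (simp_all add: run_code_def step_code_config_code[symmetric])

lemma final_code_config_code: "final_code (config_code st) \<longleftrightarrow> (\<exists>v. st = (Rt v, []))"
proof -
  obtain m S where st: "st = (m, S)" by (cases st)
  show ?thesis unfolding st by (cases m; cases S) (simp_all add: final_code_def)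
qed

lemma run_code_stable: "final_code (run_code e x s) \<Longrightarrow> s \<le> s' \<Longrightarrow> run_code e x s' = run_code e x s"
proof (induction s')
  case (Suc s')
  have "step_code z = z" if "final_code z" for z
    using that by (simp add: final_code_def step_code_def Let_def)
  with Suc show ?case by (cases "s = Suc s'") (simp_all add: run_code_def)
qed simp

text \<open>Numbers that are not codes denote the empty function, so a halting certificate must
  also certify that the index is a code. This is done by a second machine that takes a
  stack of putative codes apart.\<close>

fun check_step :: "nat list \<Rightarrow> nat list" where
  "check_step [] = []"
| "check_step (e # L) = (if nfst e \<le> 3 then (if nsnd e = 0 then L else e # L)
     else if nfst e \<le> 6 then nfst (nsnd e) # nsnd (nsnd e) # L
     else if nfst e = 7 then nsnd e # L else e # L)"

lemma iterates_to_check_step_code: "iterates_to check_step (code c # L) L"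
proof (induction c arbitrary: L)
  case (Comp c1 c2)
  have "iterates_to check_step (code c1 # code c2 # L) L"
    using Comp.IH(1)[of "code c2 # L"] Comp.IH(2)[of L] by (rule iterates_to_trans)
  then show ?case by - (rule iterates_to_step, simp add: code_npair)
next
  case (Pr c1 c2)
  have "iterates_to check_step (code c1 # code c2 # L) L"
    using Pr.IH(1)[of "code c2 # L"] Pr.IH(2)[of L] by (rule iterates_to_trans)
  then show ?case by - (rule iterates_to_step, simp add: code_npair)
next
  case (Rec c1 c2)
  have "iterates_to check_step (code c1 # code c2 # L) L"
    using Rec.IH(1)[of "code c2 # L"] Rec.IH(2)[of L] by (rule iterates_to_trans)
  then show ?case by - (rule iterates_to_step, simp add: code_npair)
next
  case (Mn c)
  then show ?case by - (rule iterates_to_step, simp add: code_npair)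
qed (rule iterates_to_step, simp add: code_npair iterates_to_refl)+

lemma check_step_preserves_codes:
  assumes "\<forall>e\<in>set (check_step L). e \<in> range code"
  shows "\<forall>e\<in>set L. e \<in> range code"
proof (cases L)
  case (Cons e L')
  have "e \<in> range code"
  proof -
    consider "nfst e \<le> 3" "nsnd e = 0" | "nfst e \<le> 3" "nsnd e \<noteq> 0"
      | "\<not> nfst e \<le> 3" "nfst e \<le> 6" | "nfst e = 7" | "\<not> nfst e \<le> 6" "nfst e \<noteq> 7"
      by linarith
    then show ?thesis
    proof cases
      case 1
      then have "e = npair (nfst e) 0" by (metis npair_nfst_nsnd)
      moreover have "nfst e = 0 \<or> nfst e = 1 \<or> nfst e = 2 \<or> nfst e = 3" using 1 by linarith
      ultimately show ?thesis by (metis code_npair(1-4) rangeI)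
    next
      case 3
      with assms Cons obtain c1 c2 where "code c1 = nfst (nsnd e)" "code c2 = nsnd (nsnd e)" by auto
      then have "e = npair (nfst e) (npair (code c1) (code c2))" by simp
      moreover have "nfst e = 4 \<or> nfst e = 5 \<or> nfst e = 6" using 3 by linarith
      ultimately show ?thesis by (metis code_npair(5-7) rangeI)
    next
      case 4
      with assms Cons obtain c1 where "code c1 = nsnd e" by auto
      then have "e = npair 7 (code c1)" using 4 by (metis npair_nfst_nsnd)
      then show ?thesis by (metis code_npair(8) rangeI)
    next
      case 2 then show ?thesis using assms Cons by simp
    next
      case 5 then show ?thesis using assms Cons by simp
    qed
  qed
  moreover have "\<forall>e\<in>set L'. e \<in> range code"
    using assms Cons by (auto split: if_splits)
  ultimately show ?thesis using Cons by simp
qed simp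

lemma iterates_to_check_step_Nil_imp_codes:
  "(check_step ^^ k) L = [] \<Longrightarrow> \<forall>e\<in>set L. e \<in> range code"
proof (induction k arbitrary: L)
  case (Suc k)
  then have "(check_step ^^ k) (check_step L) = []" by (simp add: funpow_Suc_right del: funpow.simps)
  then show ?case using Suc.IH check_step_preserves_codes by blast
qed simp

fun list_code :: "nat list \<Rightarrow> nat" where
  "list_code [] = 0"
| "list_code (e # L) = Suc (npair e (list_code L))"

definition check_step_code :: "nat \<Rightarrow> nat" where
  "check_step_code z = (if z = 0 then 0 else
    (let e = nfst (z - 1); L = nsnd (z - 1) in
     if nfst e \<le> 3 then (if nsnd e = 0 then L else z)
     else if nfst e \<le> 6 then Suc (npair (nfst (nsnd e)) (Suc (npair (nsnd (nsnd e)) L)))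
     else if nfst e = 7 then Suc (npair (nsnd e) L) else z))"

lemma check_step_code_list_code: "check_step_code (list_code L) = list_code (check_step L)"
  by (cases L) (simp_all add: check_step_code_def Let_def)

lemma recursive_check_step_code: "recursive check_step_code"
  unfolding check_step_code_def Let_def by (intro recursive_intros decidable_intros)

definition check_code :: "nat \<Rightarrow> nat \<Rightarrow> nat" where
  "check_code e s = (check_step_code ^^ s) (Suc (npair e 0))"

lemma check_code_list_code: "check_code e s = list_code ((check_step ^^ s) [e])"
  by (induction s) (simp_all add: check_code_def check_step_code_list_code[symmetric])

lemma list_code_eq_0_iff: "list_code L = 0 \<longleftrightarrow> L = []"
  by (cases L) auto

lemma check_code_eq_0_imp_code: "check_code e s = 0 \<Longrightarrow> e \<in> range code"
  using iterates_to_check_step_Nil_imp_codes[of s "[e]"]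
  by (simp add: check_code_list_code list_code_eq_0_iff)

lemma check_code_code: "\<exists>s. check_code (code c) s = 0"
  using iterates_to_check_step_code[of c "[]"]
  by (simp add: iterates_to_def check_code_list_code list_code_eq_0_iff)

lemma check_code_stable: "check_code e s = 0 \<Longrightarrow> s \<le> s' \<Longrightarrow> check_code e s' = 0"
proof (induction s')
  case (Suc s') then show ?case
    by (cases "s = Suc s'") (simp_all add: check_code_def check_step_code_def)
qed simp

definition halts_within :: "nat \<Rightarrow> nat \<Rightarrow> nat \<Rightarrow> bool" where
  "halts_within e x s \<longleftrightarrow> check_code e s = 0 \<and> final_code (run_code e x s)"

definition result :: "nat \<Rightarrow> nat \<Rightarrow> nat \<Rightarrow> nat" where
  "result e x s = nsnd (nfst (run_code e x s))"

lemma halts_within_mono: "halts_within e x s \<Longrightarrow> s \<le> s' \<Longrightarrow> halts_within e x s'"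
  unfolding halts_within_def using check_code_stable run_code_stable by metis

lemma halts_within_imp_phi: "halts_within e x s \<Longrightarrow> phi e x (result e x s)"
proof -
  assume halts: "halts_within e x s"
  then obtain c where c: "code c = e" using check_code_eq_0_imp_code unfolding halts_within_def by blast
  have "final_code (config_code ((mstep ^^ s) (Ev c x, [])))"
    using halts c run_code_code[of c x s] unfolding halts_within_def by simp
  then obtain v where v: "(mstep ^^ s) (Ev c x, []) = (Rt v, [])" using final_code_config_code by blast
  then have "ev c x v" unfolding ev_iff_reaches iterates_to_def by blast
  moreover have "result e x s = v" using v c run_code_code by (auto simp: result_def)
  ultimately show ?thesis using c phi_code by auto
qed

lemma phi_imp_halts_within: "phi e x y \<Longrightarrow> \<exists>s. halts_within e x s"
proof -
  assume "phi e x y"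
  then obtain c where c: "code c = e" "ev c x y" unfolding phi_def by blast
  then obtain k where k: "(mstep ^^ k) (Ev c x, []) = (Rt y, [])"
    unfolding ev_iff_reaches iterates_to_def by blast
  obtain s1 where s1: "check_code e s1 = 0" using check_code_code c(1) by blast
  have "final_code (run_code e x k)"
    using k run_code_code[of c x k] c(1) by (simp add: final_code_def)
  then have "halts_within e x (max s1 k)"
    using check_code_stable[OF s1] run_code_stable unfolding halts_within_def by (metis max.cobounded1 max.cobounded2)
  then show ?thesis by blast
qed

lemma result_eq: "halts_within e x s \<Longrightarrow> phi e x y \<Longrightarrow> result e x s = y"
  using halts_within_imp_phi phi_deterministic by metis

lemma halts_iff_halts_within: "(\<exists>y. phi e x y) \<longleftrightarrow> (\<exists>s. halts_within e x s)"
  using halts_within_imp_phi phi_imp_halts_within by blast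

lemma decidable_halts_within:
  "recursive a \<Longrightarrow> recursive b \<Longrightarrow> recursive s \<Longrightarrow> decidable (\<lambda>x. halts_within (a x) (b x) (s x))"
  unfolding halts_within_def final_code_def run_code_def check_code_def
  by (intro decidable_intros recursive_intros recursive_iterate recursive_step_code recursive_check_step_code)

lemma recursive_result:
  "recursive a \<Longrightarrow> recursive b \<Longrightarrow> recursive s \<Longrightarrow> recursive (\<lambda>x. result (a x) (b x) (s x))"
  unfolding result_def run_code_def by (intro recursive_intros recursive_iterate recursive_step_code)

section \<open>Finite sets coded by their canonical index\<close>

definition canon_set :: "nat \<Rightarrow> nat set" where
  "canon_set v = {z. bit v z}"

lemma mem_canon_set_iff: "z \<in> canon_set v \<longleftrightarrow> odd (v div 2 ^ z)"
  by (simp add: canon_set_def bit_iff_odd)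

lemma canon_set_subset: "canon_set v \<subseteq> {..<v}"
proof
  fix z assume "z \<in> canon_set v"
  then have "v div 2 ^ z \<noteq> 0" unfolding mem_canon_set_iff by (cases "v div 2 ^ z") auto
  then have "2 ^ z \<le> v" by (simp add: div_eq_0_iff not_less)
  then show "z \<in> {..<v}" by (meson less_exp lessThan_iff order_less_le_trans)
qed

lemma finite_canon_set: "finite (canon_set v)"
  using canon_set_subset finite_subset by blast

lemma bit_canon: "finite F \<Longrightarrow> bit (canon F) z \<longleftrightarrow> z \<in> F"
proof (induction F arbitrary: z rule: finite_induct)
  case empty then show ?case by (simp add: canon_def)
next
  case (insert a F)
  have "canon (insert a F) = 2 ^ a + canon F"
    using insert by (simp add: canon_def)
  moreover have "and (2 ^ a) (canon F) = (0::nat)"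
    by (rule bit_eqI) (use insert in \<open>auto simp: bit_and_iff bit_exp_iff\<close>)
  ultimately have "canon (insert a F) = or (2 ^ a) (canon F)" using disjunctive_add_eq_or by simp
  then show ?case using insert by (auto simp: bit_or_iff bit_exp_iff)
qed

lemma canon_set_canon: "finite F \<Longrightarrow> canon_set (canon F) = F"
  unfolding canon_set_def using bit_canon by blast

lemma card_canon_set: "card (canon_set v) = (\<Sum>z<v. if odd (v div 2 ^ z) then 1 else 0)"
proof -
  have "(\<Sum>z<v. if odd (v div 2 ^ z) then 1 else 0) = (\<Sum>z\<in>{z\<in>{..<v}. odd (v div 2 ^ z)}. 1::nat)"
    by (subst sum.inter_filter) simp_all
  also have "{z\<in>{..<v}. odd (v div 2 ^ z)} = canon_set v"
    using canon_set_subset[of v] by (auto simp: mem_canon_set_iff)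
  finally show ?thesis by simp
qed

lemma Ball_canon_set_iff: "(\<forall>z\<in>canon_set v. P z) \<longleftrightarrow> (\<forall>z<v. odd (v div 2 ^ z) \<longrightarrow> P z)"
  using canon_set_subset[of v] mem_canon_set_iff[of _ v] by blast

lemma recursive_card_canon_set:
  assumes "recursive f"
  shows "recursive (\<lambda>x. card (canon_set (f x)))"
  unfolding card_canon_set by (intro recursive_intros decidable_intros recursive_comp[OF assms] assms)

definition param_prog :: "recf \<Rightarrow> nat \<Rightarrow> recf" where
  "param_prog W k = Comp W (Pr (Pr Fst Snd) (constf k))"

definition constf_code :: "nat \<Rightarrow> nat" where
  "constf_code k = code (constf k)"

definition param_code :: "nat \<Rightarrow> nat \<Rightarrow> nat" where
  "param_code u k = npair 4 (npair u (npair 5 (npair (code (Pr Fst Snd)) (constf_code k))))"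

lemma code_param_prog: "code (param_prog W k) = param_code (code W) k"
  by (simp add: param_prog_def param_code_def code_npair constf_code_def)

lemma nfst_nsnd_param_code [simp]: "nfst (nsnd (param_code u k)) = u"
  by (simp add: param_code_def)

lemma ev_param_prog_iff: "ev (param_prog W k) x y \<longleftrightarrow> ev W (npair x k) y"
proof -
  have arg: "ev (Pr (Pr Fst Snd) (constf k)) x (npair x k)"
    using ev_Pr_npair[OF ev_Pr_npair[OF ev_Fst_nfst ev_Snd_nsnd] ev_constf] by simp
  show ?thesis
  proof
    assume "ev (param_prog W k) x y"
    then obtain w where "ev (Pr (Pr Fst Snd) (constf k)) x w" "ev W w y"
      unfolding param_prog_def by (auto elim: ev.cases)
    then show "ev W (npair x k) y" using arg ev_deterministic by blast
  next
    assume "ev W (npair x k) y"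
    then show "ev (param_prog W k) x y" unfolding param_prog_def using arg ev_Comp by blast
  qed
qed

text \<open>Since \<open>K\<close> is the diagonal halting set, the index \<open>param_code (code W) k\<close> lies in \<open>K\<close>
  iff \<open>W\<close> halts on the pair of this very index and \<open>k\<close>; this self-reference replaces the
  recursion theorem.\<close>
lemma param_code_in_K_iff: "param_code (code W) k \<in> K \<longleftrightarrow> (\<exists>y. ev W (npair (param_code (code W) k) k) y)"
proof -
  have "param_code (code W) k \<in> K \<longleftrightarrow> (\<exists>y. phi (code (param_prog W k)) (param_code (code W) k) y)"
    by (simp add: K_def code_param_prog)
  then show ?thesis by (simp only: phi_code ev_param_prog_iff)
qed

lemma recursive_param_code: "recursive a \<Longrightarrow> recursive b \<Longrightarrow> recursive (\<lambda>x. param_code (a x) (b x))"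
proof -
  have "recursive2 (\<lambda>y k. constf_code k)"
    by (rule recursive2_primrec[where f="\<lambda>x. 0" and g="\<lambda>x n prev. npair 4 (npair (npair 1 0) prev)"],
        simp_all add: constf_code_def code_npair npair_0_0, (intro recursive_basic)+)
  from recursive2_comp[OF this recursive_const]
  show "recursive a \<Longrightarrow> recursive b \<Longrightarrow> recursive (\<lambda>x. param_code (a x) (b x))"
    unfolding param_code_def by (intro recursive_basic)
qed

definition K_at :: "nat \<Rightarrow> nat \<Rightarrow> bool" where
  "K_at e s \<longleftrightarrow> halts_within e e s"

lemma K_iff_ex_K_at: "e \<in> K \<longleftrightarrow> (\<exists>s. K_at e s)"
  unfolding K_def K_at_def using halts_iff_halts_within by blast

lemma K_at_mono: "K_at e s \<Longrightarrow> s \<le> s' \<Longrightarrow> K_at e s'"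
  unfolding K_at_def using halts_within_mono by blast

definition K_entry :: "nat \<Rightarrow> nat \<Rightarrow> nat" where
  "K_entry e s = least_below (K_at e) (Suc s)"

lemma K_entry_eq_Least: "K_at e s \<Longrightarrow> K_entry e s = (LEAST t. K_at e t)"
proof -
  assume "K_at e s"
  then have "K_entry e s < Suc s" unfolding K_entry_def by (rule least_below_less) simp
  then show ?thesis unfolding K_entry_def
    using least_below_less_imp not_less_least_below by (metis Least_equality not_le)
qed

definition K_count :: "nat \<Rightarrow> nat \<Rightarrow> nat" where
  "K_count r s = (\<Sum>e<Suc r. if K_at e s then 1 else 0)"

lemma K_count_eq_card: "K_count r s = card {e. e \<le> r \<and> K_at e s}"
proof -
  have "K_count r s = (\<Sum>e\<in>{e \<in> {..<Suc r}. K_at e s}. 1)"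
    unfolding K_count_def by (subst sum.inter_filter) simp_all
  also have "{e \<in> {..<Suc r}. K_at e s} = {e. e \<le> r \<and> K_at e s}" by auto
  finally show ?thesis by simp
qed

text \<open>Requirement \<open>(r, m)\<close> with \<open>r = npair c n\<close> watches the candidate reduction \<open>c\<close> with
  bound \<open>n\<close> on the input tailored against it, guessing that \<open>m\<close> elements of \<open>{..r}\<close>
  lie in \<open>K\<close>; once that computation has produced at most \<open>n\<close> elements, they are
  withheld from the blocks of all \<open>e > r\<close>.\<close>

definition req_output :: "nat \<Rightarrow> nat \<Rightarrow> nat \<Rightarrow> nat \<Rightarrow> nat" where
  "req_output u r m s = result (nfst r) (param_code u (npair r m)) s"

definition req_ready :: "nat \<Rightarrow> nat \<Rightarrow> nat \<Rightarrow> nat \<Rightarrow> bool" where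
  "req_ready u r m s \<longleftrightarrow> halts_within (nfst r) (param_code u (npair r m)) s
     \<and> card (canon_set (req_output u r m s)) \<le> nsnd r"

definition restrained :: "nat \<Rightarrow> nat \<Rightarrow> nat \<Rightarrow> nat \<Rightarrow> bool" where
  "restrained u e s z \<longleftrightarrow>
     (\<exists>r<e. \<exists>m<Suc (Suc r). req_ready u r m s \<and> z \<in> canon_set (req_output u r m s))"

definition block_size :: "nat \<Rightarrow> nat" where
  "block_size e = Suc e * Suc e * Suc e"

definition slot :: "nat \<Rightarrow> nat \<Rightarrow> nat \<Rightarrow> nat" where
  "slot u e s = least_below (\<lambda>i. \<not> restrained u e s (npair e i)) (block_size e)"

definition A_at :: "nat \<Rightarrow> nat \<Rightarrow> nat \<Rightarrow> bool" where
  "A_at u z s \<longleftrightarrow> K_at (nfst z) s \<and> nsnd z = slot u (nfst z) (K_entry (nfst z) s)"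

text \<open>An attack on the reduction \<open>c\<close> with bound \<open>n\<close> (where \<open>k = npair (npair c n) m\<close>) waits
  for \<open>c\<close> to produce at most \<open>n\<close> elements on input \<open>x\<close> and for the count \<open>m\<close> of
  \<open>K \<inter> {..npair c n}\<close> to be reached, and at that first stage halts iff none of the
  elements is in \<open>A\<close> yet.\<close>
definition attack_ready :: "nat \<Rightarrow> nat \<Rightarrow> nat \<Rightarrow> bool" where
  "attack_ready x k s \<longleftrightarrow> halts_within (nfst (nfst k)) x s
     \<and> card (canon_set (result (nfst (nfst k)) x s)) \<le> nsnd (nfst k) \<and> nsnd k \<le> K_count (nfst k) s"

text \<open>\<open>A\<close> depends on the index \<open>u\<close> of the attacking program, which is only fixed (as
  \<open>u0\<close>) afterwards; the attacker reads \<open>u\<close> off its own input \<open>x = param_code u k\<close>.\<close>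
definition attack_fires :: "nat \<Rightarrow> nat \<Rightarrow> nat \<Rightarrow> bool" where
  "attack_fires x k s \<longleftrightarrow> attack_ready x k s \<and> (\<forall>s'<s. \<not> attack_ready x k s') \<and>
     (\<forall>z\<in>canon_set (result (nfst (nfst k)) x s). \<not> A_at (nfst (nsnd x)) z s)"

lemma decidable_K_at: "recursive a \<Longrightarrow> recursive b \<Longrightarrow> decidable (\<lambda>x. K_at (a x) (b x))"
  unfolding K_at_def by (intro decidable_halts_within)

lemma recursive_K_count:
  assumes "recursive a" "recursive b"
  shows "recursive (\<lambda>x. K_count (a x) (b x))"
  unfolding K_count_def
  by (intro recursive_intros decidable_K_at recursive_comp[OF assms(1)] recursive_comp[OF assms(2)] assms)

lemma recursive_req_output:
  "recursive a \<Longrightarrow> recursive b \<Longrightarrow> recursive c \<Longrightarrow> recursive d \<Longrightarrow>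
    recursive (\<lambda>x. req_output (a x) (b x) (c x) (d x))"
  unfolding req_output_def by (intro recursive_result recursive_param_code recursive_intros)

lemma decidable_req_ready:
  "recursive a \<Longrightarrow> recursive b \<Longrightarrow> recursive c \<Longrightarrow> recursive d \<Longrightarrow>
    decidable (\<lambda>x. req_ready (a x) (b x) (c x) (d x))"
  unfolding req_ready_def
  by (intro decidable_intros decidable_halts_within recursive_card_canon_set recursive_req_output
      recursive_param_code recursive_intros)

lemma decidable_restrained:
  assumes "recursive a" "recursive b" "recursive c" "recursive d"
  shows "decidable (\<lambda>x. restrained (a x) (b x) (c x) (d x))"
  unfolding restrained_def mem_canon_set_iff
  by (intro decidable_intros decidable_req_ready recursive_req_output recursive_intros
      recursive_comp[OF assms(1)] recursive_comp[OF assms(2)] recursive_comp[OF assms(3)]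
      recursive_comp[OF assms(4)] assms)

lemma recursive_slot:
  assumes "recursive a" "recursive b" "recursive c"
  shows "recursive (\<lambda>x. slot (a x) (b x) (c x))"
  unfolding slot_def block_size_def
  by (intro recursive_intros decidable_intros decidable_restrained recursive_comp[OF assms(1)]
      recursive_comp[OF assms(2)] recursive_comp[OF assms(3)] assms)

lemma recursive_K_entry:
  assumes "recursive a" "recursive b"
  shows "recursive (\<lambda>x. K_entry (a x) (b x))"
  unfolding K_entry_def
  by (intro recursive_intros decidable_K_at recursive_comp[OF assms(1)] recursive_comp[OF assms(2)] assms)

lemma decidable_A_at: "recursive a \<Longrightarrow> recursive b \<Longrightarrow> recursive c \<Longrightarrow> decidable (\<lambda>x. A_at (a x) (b x) (c x))"
  unfolding A_at_def
  by (intro decidable_intros decidable_K_at recursive_slot recursive_K_entry recursive_intros)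

lemma decidable_attack_ready:
  "recursive a \<Longrightarrow> recursive b \<Longrightarrow> recursive c \<Longrightarrow> decidable (\<lambda>x. attack_ready (a x) (b x) (c x))"
  unfolding attack_ready_def
  by (intro decidable_intros decidable_halts_within recursive_card_canon_set recursive_result
      recursive_K_count recursive_intros)

lemma decidable_attack_fires:
  assumes "recursive a" "recursive b" "recursive c"
  shows "decidable (\<lambda>x. attack_fires (a x) (b x) (c x))"
  unfolding attack_fires_def Ball_canon_set_iff
  by (intro decidable_intros decidable_attack_ready decidable_A_at recursive_result recursive_intros
      recursive_comp[OF assms(1)] recursive_comp[OF assms(2)] recursive_comp[OF assms(3)] assms)

definition attack_test :: recf where
  "attack_test = (SOME c. \<forall>w. ev c w (if attack_fires (nfst (nfst w)) (nsnd (nfst w)) (nsnd w) then 0 else 1))"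

lemma ev_attack_test: "ev attack_test w (if attack_fires (nfst (nfst w)) (nsnd (nfst w)) (nsnd w) then 0 else 1)"
proof -
  have "decidable (\<lambda>w. attack_fires (nfst (nfst w)) (nsnd (nfst w)) (nsnd w))"
    by (intro decidable_attack_fires recursive_intros)
  then show ?thesis unfolding attack_test_def decidable_def recursive_def by (rule someI_ex[THEN spec])
qed

definition u0 :: nat where
  "u0 = code (Mn attack_test)"

lemma param_code_u0_in_K_iff: "param_code u0 k \<in> K \<longleftrightarrow> (\<exists>s. attack_fires (param_code u0 k) k s)"
proof -
  have "param_code u0 k \<in> K \<longleftrightarrow> (\<exists>y. ev (Mn attack_test) (npair (param_code u0 k) k) y)"
    unfolding u0_def by (rule param_code_in_K_iff)
  also have "\<dots> \<longleftrightarrow> (\<exists>s. attack_fires (param_code u0 k) k s)"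
    by (subst ev_Mn_halts_iff[OF ev_attack_test]) simp
  finally show ?thesis .
qed

definition Aset :: "nat set" where
  "Aset = {z. \<exists>s. A_at u0 z s}"

lemma re_Aset: "re Aset"
proof -
  have "decidable (\<lambda>w. A_at u0 (nfst w) (nsnd w))" by (intro decidable_A_at recursive_intros)
  then obtain c where c: "\<And>w. ev c w (if A_at u0 (nfst w) (nsnd w) then 0 else 1)"
    unfolding decidable_def recursive_def by blast
  have "Aset = {x. \<exists>y. phi (code (Mn c)) x y}"
    unfolding Aset_def phi_code ev_Mn_halts_iff[OF c] by simp
  then show ?thesis unfolding re_def by blast
qed

section \<open>The set is d-complete\<close>

lemma card_restrained_less_block_size:
  "finite {z. restrained u e s z} \<and> card {z. restrained u e s z} < block_size e"
proof -
  define R where "R r m = (if req_ready u r m s then canon_set (req_output u r m s) else {})" for r m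
  have restrained_eq: "{z. restrained u e s z} = (\<Union>r<e. \<Union>m<Suc (Suc r). R r m)"
    unfolding restrained_def R_def by auto
  have card_R: "card (R r m) \<le> e" if "r < e" for r m
  proof (cases "req_ready u r m s")
    case True
    then have "card (R r m) \<le> nsnd r" by (simp add: R_def req_ready_def)
    then show ?thesis using nsnd_le[of r] that by linarith
  qed (simp add: R_def)
  have "card {z. restrained u e s z} \<le> (\<Sum>r<e. card (\<Union>m<Suc (Suc r). R r m))"
    unfolding restrained_eq by (rule card_UN_le) simp
  also have "\<dots> \<le> (\<Sum>r<e. \<Sum>m<Suc (Suc r). card (R r m))"
    by (intro sum_mono card_UN_le) simp
  also have "\<dots> \<le> (\<Sum>r<e. \<Sum>m<Suc (Suc r). e)"
    using card_R by (intro sum_mono) simp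
  also have "\<dots> = (\<Sum>r<e. Suc (Suc r) * e)" by simp
  also have "\<dots> \<le> (\<Sum>r<e. Suc e * e)"
    by (intro sum_mono mult_le_mono1) simp
  also have "\<dots> = e * (Suc e * e)" by simp
  also have "\<dots> \<le> Suc e * (Suc e * e)" by (rule mult_le_mono1) simp
  also have "\<dots> < block_size e"
    unfolding block_size_def mult.assoc by (intro mult_less_mono2) simp_all
  finally show ?thesis
    unfolding restrained_eq by (auto simp: R_def finite_canon_set)
qed

lemma ex_unrestrained_in_block: "\<exists>i<block_size e. \<not> restrained u e s (npair e i)"
proof (rule ccontr)
  assume "\<not> ?thesis"
  then have "npair e ` {..<block_size e} \<subseteq> {z. restrained u e s z}" by auto
  then have "card (npair e ` {..<block_size e}) \<le> card {z. restrained u e s z}"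
    using card_restrained_less_block_size by (intro card_mono) auto
  moreover have "card (npair e ` {..<block_size e}) = block_size e"
    by (subst card_image) (auto simp: inj_on_def)
  ultimately show False using card_restrained_less_block_size[of u e s] by linarith
qed

lemma slot_less_block_size: "slot u e s < block_size e"
proof -
  obtain i where "i < block_size e" "\<not> restrained u e s (npair e i)"
    using ex_unrestrained_in_block by blast
  then show ?thesis unfolding slot_def by (intro least_below_less)
qed

lemma not_restrained_slot: "\<not> restrained u e s (npair e (slot u e s))"
  using least_below_less_imp[OF slot_less_block_size[unfolded slot_def]] unfolding slot_def .

definition block :: "nat \<Rightarrow> nat set" where
  "block e = npair e ` {..<block_size e}"

lemma computable_fin_block: "computable_fin block"
  unfolding computable_fin_def
proof
  show "\<forall>e. finite (block e)" by (simp add: block_def)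
  have "canon (block e) = (\<Sum>i<block_size e. 2 ^ npair e i)" for e
    unfolding canon_def block_def by (subst sum.reindex) (auto simp: inj_on_def)
  moreover have "recursive (\<lambda>e. \<Sum>i<block_size e. 2 ^ npair e i)"
    unfolding block_size_def by (intro recursive_intros)
  ultimately show "computable (\<lambda>e. canon (block e))"
    by (simp add: recursive_imp_computable)
qed

lemma K_iff_block_meets_Aset: "e \<in> K \<longleftrightarrow> (\<exists>z\<in>block e. z \<in> Aset)"
proof
  assume "e \<in> K"
  then obtain s where s: "K_at e s" using K_iff_ex_K_at by blast
  define z where "z = npair e (slot u0 e (K_entry e s))"
  have "z \<in> block e" unfolding z_def block_def using slot_less_block_size by blast
  moreover have "A_at u0 z s" unfolding A_at_def z_def using s by simp
  ultimately show "\<exists>z\<in>block e. z \<in> Aset" unfolding Aset_def by blast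
next
  assume "\<exists>z\<in>block e. z \<in> Aset"
  then obtain i s where "A_at u0 (npair e i) s" unfolding block_def Aset_def by blast
  then show "e \<in> K" unfolding A_at_def K_iff_ex_K_at by auto
qed

theorem d_complete_Aset: "d_complete Aset"
  unfolding d_complete_def using re_Aset computable_fin_block K_iff_block_meets_Aset by blast

section \<open>The set is not n-d-complete\<close>

lemma A_at_iff: "A_at u z s \<longleftrightarrow> K_at (nfst z) s \<and> nsnd z = slot u (nfst z) (LEAST t. K_at (nfst z) t)"
  unfolding A_at_def by (auto simp: K_entry_eq_Least)

lemma K_count_le_card_K: "K_count r s \<le> card {e. e \<le> r \<and> e \<in> K}"
  unfolding K_count_eq_card by (rule card_mono) (auto simp: K_iff_ex_K_at)

lemma K_count_mono: "s \<le> s' \<Longrightarrow> K_count r s \<le> K_count r s'"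
  unfolding K_count_eq_card by (rule card_mono) (auto intro: K_at_mono)

lemma ex_K_at_all: "finite E \<Longrightarrow> E \<subseteq> K \<Longrightarrow> \<exists>s. \<forall>e\<in>E. K_at e s"
proof (induction E rule: finite_induct)
  case (insert e E)
  then obtain s1 s2 where "\<forall>e\<in>E. K_at e s1" "K_at e s2" using K_iff_ex_K_at by auto
  then have "\<forall>e'\<in>insert e E. K_at e' (max s1 s2)" by (auto intro: K_at_mono)
  then show ?case by blast
qed simp

lemma ex_K_count_eq_card_K: "\<exists>s. K_count r s = card {e. e \<le> r \<and> e \<in> K}"
proof -
  obtain s where "\<forall>e\<in>{e. e \<le> r \<and> e \<in> K}. K_at e s" using ex_K_at_all[of "{e. e \<le> r \<and> e \<in> K}"] by auto
  then have "{e. e \<le> r \<and> K_at e s} = {e. e \<le> r \<and> e \<in> K}" by (auto simp: K_iff_ex_K_at)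
  then have "K_count r s = card {e. e \<le> r \<and> e \<in> K}" unfolding K_count_eq_card by simp
  then show ?thesis ..
qed

lemma K_at_if_K_count_eq_card_K:
  assumes "K_count r s = card {e. e \<le> r \<and> e \<in> K}" and "e \<le> r" and "e \<in> K"
  shows "K_at e s"
proof -
  have "{e. e \<le> r \<and> K_at e s} \<subseteq> {e. e \<le> r \<and> e \<in> K}" by (auto simp: K_iff_ex_K_at)
  then have "{e. e \<le> r \<and> K_at e s} = {e. e \<le> r \<and> e \<in> K}"
    using assms(1) unfolding K_count_eq_card by (intro card_subset_eq) auto
  then show ?thesis using assms(2,3) by blast
qed

definition attack_param :: "nat \<Rightarrow> nat \<Rightarrow> nat" where
  "attack_param c n = npair (npair c n) (card {e. e \<le> npair c n \<and> e \<in> K})"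

definition attack_input :: "nat \<Rightarrow> nat \<Rightarrow> nat" where
  "attack_input c n = param_code u0 (attack_param c n)"

definition first_ready :: "nat \<Rightarrow> nat \<Rightarrow> nat" where
  "first_ready c n = (LEAST s. attack_ready (attack_input c n) (attack_param c n) s)"

context
  fixes c n :: nat and F :: "nat set"
  assumes phi_attack_input: "phi c (attack_input c n) (canon F)"
    and finite_F: "finite F" and card_F: "card F \<le> n"
begin

lemma result_attack_input: "halts_within c (attack_input c n) s \<Longrightarrow> canon_set (result c (attack_input c n) s) = F"
  using result_eq[OF _ phi_attack_input] canon_set_canon[OF finite_F] by simp

lemma attack_ready_iff:
  "attack_ready (attack_input c n) (attack_param c n) s \<longleftrightarrow>
    halts_within c (attack_input c n) s \<and> K_count (npair c n) s = card {e. e \<le> npair c n \<and> e \<in> K}"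
  using result_attack_input card_F K_count_le_card_K[of "npair c n" s]
  unfolding attack_ready_def by (auto simp: attack_param_def)

lemma attack_ready_first_ready: "attack_ready (attack_input c n) (attack_param c n) (first_ready c n)"
proof -
  obtain s0 where "halts_within c (attack_input c n) s0"
    using phi_imp_halts_within[OF phi_attack_input] by blast
  moreover obtain s1 where "K_count (npair c n) s1 = card {e. e \<le> npair c n \<and> e \<in> K}"
    using ex_K_count_eq_card_K by blast
  ultimately have "attack_ready (attack_input c n) (attack_param c n) (max s0 s1)"
    unfolding attack_ready_iff
    using halts_within_mono K_count_mono[of s1 "max s0 s1" "npair c n"] K_count_le_card_K
    by (metis le_antisym max.cobounded1 max.cobounded2)
  then show ?thesis unfolding first_ready_def by (rule LeastI)
qed

lemma K_at_first_ready: "e \<le> npair c n \<Longrightarrow> e \<in> K \<Longrightarrow> K_at e (first_ready c n)"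
  using attack_ready_first_ready K_at_if_K_count_eq_card_K unfolding attack_ready_iff by blast

lemma attack_input_in_K_iff: "attack_input c n \<in> K \<longleftrightarrow> (\<forall>z\<in>F. \<not> A_at u0 z (first_ready c n))"
proof -
  have fires_iff: "attack_fires (attack_input c n) (attack_param c n) s \<longleftrightarrow>
      s = first_ready c n \<and> (\<forall>z\<in>F. \<not> A_at u0 z s)" for s
  proof -
    have "attack_ready (attack_input c n) (attack_param c n) s \<and>
        (\<forall>s'<s. \<not> attack_ready (attack_input c n) (attack_param c n) s') \<longleftrightarrow> s = first_ready c n"
      using attack_ready_first_ready unfolding first_ready_def
      by (metis (no_types, lifting) Least_equality linorder_not_less not_less_Least)
    moreover have "attack_ready (attack_input c n) (attack_param c n) s \<Longrightarrow>
        canon_set (result c (attack_input c n) s) = F"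
      using result_attack_input unfolding attack_ready_iff by blast
    ultimately show ?thesis
      unfolding attack_fires_def using attack_ready_first_ready
      by (auto simp: attack_param_def attack_input_def)
  qed
  show ?thesis
    unfolding attack_input_def param_code_u0_in_K_iff
    using fires_iff[unfolded attack_input_def] by auto
qed

lemma restrained_after_first_ready:
  assumes "first_ready c n \<le> t" and "npair c n < e" and "z \<in> F"
  shows "restrained u0 e t z"
proof -
  let ?r = "npair c n" and ?m = "card {e. e \<le> npair c n \<and> e \<in> K}"
  have halts: "halts_within c (attack_input c n) t"
    using attack_ready_first_ready assms(1) halts_within_mono unfolding attack_ready_iff by blast
  have input_eq: "param_code u0 (npair ?r ?m) = attack_input c n"
    by (simp add: attack_input_def attack_param_def)
  have output_eq: "canon_set (req_output u0 ?r ?m t) = F"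
    using result_attack_input[OF halts] by (simp add: req_output_def input_eq)
  have "?m \<le> card {..?r}" by (rule card_mono) auto
  then have "?m < Suc (Suc ?r)" by simp
  moreover have "req_ready u0 ?r ?m t"
    unfolding req_ready_def input_eq output_eq using halts card_F by simp
  ultimately show ?thesis unfolding restrained_def using assms(2,3) output_eq by blast
qed

lemma A_at_first_ready:
  assumes "z \<in> F" and "z \<in> Aset"
  shows "A_at u0 z (first_ready c n)"
proof -
  define e where "e = nfst z"
  define T where "T = (LEAST t. K_at e t)"
  obtain s where "A_at u0 z s" using assms(2) unfolding Aset_def by blast
  then have K_at_e: "K_at e s" and slot_z: "nsnd z = slot u0 e T"
    unfolding A_at_iff e_def T_def by auto
  have "K_at e (first_ready c n)"
  proof (cases "e \<le> npair c n")
    case True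
    then show ?thesis using K_at_first_ready K_at_e K_iff_ex_K_at by blast
  next
    case False
    show ?thesis
    proof (rule ccontr)
      assume not_K_at: "\<not> K_at e (first_ready c n)"
      have "K_at e T" unfolding T_def using K_at_e by (rule LeastI)
      then have "first_ready c n \<le> T" using not_K_at K_at_mono by (metis nat_le_linear)
      then have "restrained u0 e T z" using restrained_after_first_ready False assms(1) by simp
      moreover have "z = npair e (slot u0 e T)" using slot_z unfolding e_def by (metis npair_nfst_nsnd)
      ultimately show False using not_restrained_slot by metis
    qed
  qed
  then show ?thesis using slot_z unfolding A_at_iff e_def T_def by simp
qed

end

theorem not_n_d_complete_Aset: "\<not> n_d_complete n Aset"
proof
  assume "n_d_complete n Aset"
  then obtain f where f: "computable_fin f" and card_f: "\<forall>e. card (f e) \<le> n"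
    and reduction: "\<forall>e. e \<in> K \<longleftrightarrow> (\<exists>z\<in>f e. z \<in> Aset)"
    unfolding n_d_complete_def by blast
  then obtain c where "\<forall>x. phi c x (canon (f x))" and finite_f: "\<forall>e. finite (f e)"
    unfolding computable_fin_def computable_def by blast
  then have "phi c (attack_input c n) (canon (f (attack_input c n)))" by blast
  note attack = this finite_f[rule_format] card_f[rule_format]
  have "attack_input c n \<in> K \<longleftrightarrow> (\<exists>z\<in>f (attack_input c n). A_at u0 z (first_ready c n))"
    using reduction A_at_first_ready[OF attack] unfolding Aset_def by blast
  then show False using attack_input_in_K_iff[OF attack] by blast
qed

theorem mainTheorem8:
  shows "\<exists>A :: nat set. d_complete A \<and> (\<forall>n. \<not> n_d_complete n A)"
  using d_complete_Aset not_n_d_complete_Aset by blast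

end
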